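(* Let $C$ be the Klein quartic $\{X^3Y+Y^3Z+Z^3X=0\}\subset\mathbb{C}P^2$ with affine coordinates $x=X^3Y^{-2}Z^{-1}+1$, $y=-XY^{-1}$ (so $y^7=x(1-x)^2$). Let $\zeta_7=\exp(2\pi\sqrt{-1}/7)$, $e_0(t)=(t,\sqrt[7]{t(1-t)^2})$, $t\in[0,1]$ (real nonnegative root), $\sigma(x,y)=(x,\zeta_7y)$, and for $k=0,\dots,7$ let $\ell_k$ be the loop $\sigma^{k-1}_\ast(e_0)\cdot\sigma^k_\ast(e_0)^{-1}$ based at $(x,y)=(0,0)$. Let $(h_1,h_2,h_3,h_4)=(1/7,2/7,4/7,1/7)$, $\xi_i=\zeta_7^{7h_i}$, and $\omega_i=\omega'_i/B(h_i,h_{i+1})$ for $i=1,2,3$, where $\omega'_1=(1-x)dx/y^6$, $\omega'_2=(1-x)dx/y^5$, $\omega'_3=dx/y^3$ and $B$ is the beta function. Let $x_{i,j}=\int_{e_0}\omega_i\omega_j$. Then for $i,j\in\{1,2,3\}$ and all $k$, $$\int_{\ell_k}\omega_i\omega_j=(\xi_i\xi_j)^{k-1}(1-\xi_i\xi_j)\,x_{i,j}+(\xi_i\xi_j)^{k-1}(\xi_i\xi_j-\xi_j).$$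
   Context: For a path $\gamma\colon[0,1]\to C$ and $1$-forms $a,b$ with $\gamma^\ast a=f(t)dt$, $\gamma^\ast b=g(t)dt$, Chen's iterated integral is $\int_\gamma ab=\int_{0\le t_1\le t_2\le 1}f(t_1)g(t_2)\,dt_1dt_2$. *)

theory Defs
  imports "HOL-Analysis.Analysis"
begin

text \<open>Points of the affine Klein quartic y^7 = x(1-x)^2 are pairs (x,y) of complex numbers.
  A 1-form a(x,y) dx on the curve is represented by its coefficient function a.\<close>

definition zeta7 :: complex where
  "zeta7 = exp (2 * of_real pi * \<i> / 7)"

definition e0 :: "real \<Rightarrow> complex \<times> complex" where
  "e0 t = (complex_of_real t, complex_of_real (root 7 (t * (1 - t)^2)))"

definition sigma_pow :: "int \<Rightarrow> complex \<times> complex \<Rightarrow> complex \<times> complex" where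
  "sigma_pow m p = (fst p, zeta7 powi m * snd p)"

definition loop_l :: "int \<Rightarrow> real \<Rightarrow> complex \<times> complex" where
  "loop_l k = (sigma_pow (k - 1) \<circ> e0) +++ reversepath (sigma_pow k \<circ> e0)"

definition pullback :: "(real \<Rightarrow> complex \<times> complex) \<Rightarrow> (complex \<times> complex \<Rightarrow> complex) \<Rightarrow> real \<Rightarrow> complex" where
  "pullback g a t = a (g t) * vector_derivative (\<lambda>s. fst (g s)) (at t within {0..1})"

definition iter_int :: "(real \<Rightarrow> complex \<times> complex) \<Rightarrow> (complex \<times> complex \<Rightarrow> complex)
     \<Rightarrow> (complex \<times> complex \<Rightarrow> complex) \<Rightarrow> complex" where
  "iter_int g a b = integral {(t1, t2). 0 \<le> t1 \<and> t1 \<le> t2 \<and> t2 \<le> 1}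
      (\<lambda>(t1, t2). pullback g a t1 * pullback g b t2)"

definition hh :: "nat \<Rightarrow> real" where
  "hh i = (if i = 1 then 1/7 else if i = 2 then 2/7 else if i = 3 then 4/7 else if i = 4 then 1/7 else 0)"

text \<open>xi_i = zeta7^(7 h_i); 7 h_i is a natural number.\<close>
definition xi :: "nat \<Rightarrow> complex" where
  "xi i = zeta7 ^ nat (round (7 * hh i))"

definition omega' :: "nat \<Rightarrow> complex \<times> complex \<Rightarrow> complex" where
  "omega' i p = (if i = 1 then (1 - fst p) / (snd p)^6
                 else if i = 2 then (1 - fst p) / (snd p)^5
                 else if i = 3 then 1 / (snd p)^3 else 0)"

definition omega :: "nat \<Rightarrow> complex \<times> complex \<Rightarrow> complex" where
  "omega i p = omega' i p / complex_of_real (Beta (hh i) (hh (i + 1)))"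

definition xx :: "nat \<Rightarrow> nat \<Rightarrow> complex" where
  "xx i j = iter_int e0 (omega i) (omega j)"

end

theory Submission
  imports Defs
begin

text \<open>Along e0 the form omega_i pulls back to the Beta density with parameters (h_i, h_(i+1)),
  of total mass 1, and sigma multiplies omega_i by xi_i. Hence along l_k the pullback of omega_i
  is xi_i^(k-1) times the rescaled density on the first half of the loop and -xi_i^k times the
  reflected one on the second half. The simplex t1 <= t2 splits into two half-size simplices and
  the square between them, which contribute (xi_i xi_j)^(k-1) x_ij, -xi_i^(k-1) xi_j^k and
  (xi_i xi_j)^k (1 - x_ij); the last because the two simplices of the unit square together carry
  the total mass 1 of the product density (Fubini).\<close>

section \<open>Equivariance under sigma\<close>

lemma divide_mult_power_root_of_unity:
  fixes c :: "'a::field"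
  assumes "c ^ N = 1" and "n \<le> N"
  shows "z / (c * y) ^ n = c ^ (N - n) * (z / y ^ n)"
proof -
  have "c ^ n * c ^ (N - n) = 1"
    using assms by (simp flip: power_add)
  then have "inverse (c ^ n) = c ^ (N - n)"
    by (rule inverse_unique)
  then show ?thesis
    by (simp add: power_mult_distrib divide_inverse inverse_mult_distrib mult_ac)
qed

lemma zeta7_pow_7: "zeta7 ^ 7 = 1"
proof -
  have "zeta7 ^ 7 = exp (of_nat 7 * (2 * of_real pi * \<i> / 7))"
    unfolding zeta7_def by (rule exp_of_nat_mult[symmetric])
  then show ?thesis
    by (simp add: mult_ac)
qed

lemma zeta7_powi_pow_7: "(zeta7 powi m) ^ 7 = 1"
proof -
  have "(zeta7 powi m) ^ 7 = (zeta7 ^ 7) powi m"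
    by (simp add: power_int_power' power_int_power mult.commute)
  then show ?thesis
    by (simp add: zeta7_pow_7)
qed

text \<open>omega'_i has denominator y^n with 7 - n = 7 h_i, so sigma^m scales it by
  zeta7^(m (7 - n)) = xi_i^m.\<close>

lemma omega_sigma_pow:
  assumes "a \<in> {1,2,3}"
  shows "omega a (sigma_pow m p) = xi a powi m * omega a p"
proof -
  define c where "c = zeta7 powi m"
  have c7: "c ^ 7 = 1"
    unfolding c_def by (rule zeta7_powi_pow_7)
  have "omega' a (fst p, c * snd p) = xi a powi m * omega' a p"
    using assms c7 divide_mult_power_root_of_unity[OF c7]
    by (auto simp: omega'_def xi_def hh_def c_def power_int_power' power_int_power mult.commute
        simp flip: power_int_mult)
  then show ?thesis
    by (simp add: omega_def sigma_pow_def c_def)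
qed

section \<open>Pullbacks along e0 and the loops\<close>

definition beta_density :: "real \<Rightarrow> real \<Rightarrow> real \<Rightarrow> real" where
  "beta_density p q t = indicator {0..1} t * (t powr (p - 1) * (1 - t) powr (q - 1)) / Beta p q"

lemma beta_density_eq_0: "t \<notin> {0..1} \<Longrightarrow> beta_density p q t = 0"
  by (simp add: beta_density_def)

lemma Beta_real_pos: "0 < p \<Longrightarrow> 0 < q \<Longrightarrow> 0 < Beta p (q::real)"
  by (simp add: Beta_def Gamma_real_pos)

lemma
  assumes "0 < p" and "0 < q"
  shows integrable_beta_density: "integrable lborel (beta_density p q)"
    and integral_beta_density: "integral\<^sup>L lborel (beta_density p q) = 1"
proof -
  have Beta: "set_integrable lborel {0..1} (\<lambda>t. t powr (p - 1) * (1 - t) powr (q - 1))"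
    using integrable_Beta[OF assms] .
  have density: "beta_density p q =
      (\<lambda>t. (indicator {0..1} t *\<^sub>R (t powr (p - 1) * (1 - t) powr (q - 1))) / Beta p q)"
    by (simp add: beta_density_def fun_eq_iff)
  show "integrable lborel (beta_density p q)"
    unfolding density using Beta unfolding set_integrable_def by (rule integrable_divide_zero)
  have "(LINT t:{0..1}|lborel. t powr (p - 1) * (1 - t) powr (q - 1)) = Beta p q"
    using set_borel_integral_eq_integral(2)[OF Beta] has_integral_Beta_real[OF assms]
    by (simp add: integral_unique)
  then show "integral\<^sup>L lborel (beta_density p q) = 1"
    unfolding density set_lebesgue_integral_def using Beta_real_pos[OF assms] by simp
qed

lemma
  assumes "a \<in> {1,2,3}"
  shows integrable_beta_density_hh: "integrable lborel (beta_density (hh a) (hh (a + 1)))"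
    and integral_beta_density_hh: "integral\<^sup>L lborel (beta_density (hh a) (hh (a + 1))) = 1"
proof -
  have "0 < hh a" "0 < hh (a + 1)"
    using assms by (auto simp: hh_def)
  then show "integrable lborel (beta_density (hh a) (hh (a + 1)))"
    "integral\<^sup>L lborel (beta_density (hh a) (hh (a + 1))) = 1"
    by (simp_all add: integrable_beta_density integral_beta_density)
qed

lemma root7_quotient_eq_powr:
  fixes s :: real
  assumes "0 < s" and "s < 1"
  shows "(1 - s) ^ n / root 7 (s * (1 - s)^2) ^ q = s powr (- (q / 7)) * (1 - s) powr (n - 2 * q / 7)"
proof -
  have "root 7 (s * (1 - s)^2) = exp ((ln s + 2 * ln (1 - s)) / 7)"
    using assms by (simp add: root_powr_inverse powr_def ln_mult ln_realpow)
  then have "(1 - s) ^ n / root 7 (s * (1 - s)^2) ^ q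
      = exp (n * ln (1 - s) - q * ((ln s + 2 * ln (1 - s)) / 7))"
    using assms by (simp add: exp_diff exp_of_nat_mult flip: exp_of_nat_mult[of q])
  also have "\<dots> = exp (- (q / 7) * ln s) * exp ((n - 2 * q / 7) * ln (1 - s))"
    by (simp add: field_simps flip: exp_add)
  finally show ?thesis
    using assms by (simp add: powr_def)
qed

lemma omega_e0:
  assumes "a \<in> {1,2,3}" and "0 < s" and "s < 1"
  shows "omega a (e0 s) = of_real (beta_density (hh a) (hh (a + 1)) s)"
proof -
  have "omega' a (e0 s) = of_real (s powr (hh a - 1) * (1 - s) powr (hh (a + 1) - 1))"
    using assms
      root7_quotient_eq_powr[OF assms(2,3), of 1 6, THEN arg_cong[where f = complex_of_real]]
      root7_quotient_eq_powr[OF assms(2,3), of 1 5, THEN arg_cong[where f = complex_of_real]]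
      root7_quotient_eq_powr[OF assms(2,3), of 0 3, THEN arg_cong[where f = complex_of_real]]
    by (auto simp: omega'_def e0_def hh_def)
  then show ?thesis
    using assms by (simp add: omega_def beta_density_def)
qed

lemma vector_derivative_within_unit_interval:
  fixes g :: "real \<Rightarrow> complex"
  assumes "open U" and "t \<in> U" and "t \<in> {0..1}"
    and "\<And>s. s \<in> U \<Longrightarrow> g s = of_real (a + b * s)"
  shows "vector_derivative g (at t within {0..1}) = of_real b"
proof -
  have "((\<lambda>s. of_real (a + b * s)) has_vector_derivative of_real b) (at t)"
    by (rule has_vector_derivative_of_real) (auto intro!: derivative_eq_intros)
  then have "(g has_vector_derivative of_real b) (at t)"
    by (rule has_vector_derivative_transform_within_open) (use assms in auto)
  then have "(g has_vector_derivative of_real b) (at t within cbox 0 1)"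
    by (rule has_vector_derivative_at_within)
  then show ?thesis
    using assms(3) vector_derivative_within_cbox[of 0 1 t g] by simp
qed

lemma loop_l_first_half: "t \<le> 1/2 \<Longrightarrow> loop_l k t = sigma_pow (k - 1) (e0 (2 * t))"
  by (simp add: loop_l_def joinpaths_def)

lemma loop_l_second_half: "1/2 < t \<Longrightarrow> loop_l k t = sigma_pow k (e0 (2 - 2 * t))"
  by (simp add: loop_l_def joinpaths_def reversepath_def algebra_simps)

lemma pullback_e0:
  assumes "a \<in> {1,2,3}" and "0 < t" and "t < 1"
  shows "pullback e0 (omega a) t = of_real (beta_density (hh a) (hh (a + 1)) t)"
proof -
  have "vector_derivative (\<lambda>s. fst (e0 s)) (at t within {0..1}) = of_real 1"
    using assms by (intro vector_derivative_within_unit_interval[where U = UNIV and a = 0])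
      (auto simp: e0_def)
  then show ?thesis
    using assms by (simp add: pullback_def omega_e0)
qed

lemma pullback_loop_l:
  assumes "a \<in> {1,2,3}"
  shows "0 < t \<Longrightarrow> t < 1/2 \<Longrightarrow> pullback (loop_l k) (omega a) t
      = xi a powi (k - 1) * of_real (2 * beta_density (hh a) (hh (a + 1)) (2 * t))"
    and "1/2 < t \<Longrightarrow> t < 1 \<Longrightarrow> pullback (loop_l k) (omega a) t
      = - (xi a powi k) * of_real (2 * beta_density (hh a) (hh (a + 1)) (2 - 2 * t))"
proof -
  assume "0 < t" "t < 1/2"
  then have "vector_derivative (\<lambda>s. fst (loop_l k s)) (at t within {0..1}) = of_real 2"
    by (intro vector_derivative_within_unit_interval[where U = "{..<1/2}" and a = 0])
      (auto simp: loop_l_first_half e0_def sigma_pow_def)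
  with \<open>0 < t\<close> \<open>t < 1/2\<close> show "pullback (loop_l k) (omega a) t
      = xi a powi (k - 1) * of_real (2 * beta_density (hh a) (hh (a + 1)) (2 * t))"
    using assms by (simp add: pullback_def loop_l_first_half omega_sigma_pow omega_e0)
next
  assume "1/2 < t" "t < 1"
  then have "vector_derivative (\<lambda>s. fst (loop_l k s)) (at t within {0..1}) = of_real (-2)"
    by (intro vector_derivative_within_unit_interval[where U = "{1/2<..}" and a = 2])
      (auto simp: loop_l_second_half e0_def sigma_pow_def)
  with \<open>1/2 < t\<close> \<open>t < 1\<close> show "pullback (loop_l k) (omega a) t
      = - (xi a powi k) * of_real (2 * beta_density (hh a) (hh (a + 1)) (2 - 2 * t))"
    using assms by (simp add: pullback_def loop_l_second_half omega_sigma_pow omega_e0)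
qed

section \<open>Integrals over triangles\<close>

lemma lborel_integral_tensor:
  fixes f g :: "real \<Rightarrow> real"
  assumes f: "integrable lborel f" and g: "integrable lborel g"
  shows "integrable lborel (\<lambda>x::real \<times> real. f (fst x) * g (snd x))"
    and "integral\<^sup>L lborel (\<lambda>x::real \<times> real. f (fst x) * g (snd x))
         = integral\<^sup>L lborel f * integral\<^sup>L lborel g"
proof -
  have [measurable]: "f \<in> borel_measurable lborel" "g \<in> borel_measurable lborel"
    using f g by (auto intro: borel_measurable_integrable)
  have int: "integrable (lborel \<Otimes>\<^sub>M lborel) (\<lambda>x::real \<times> real. f (fst x) * g (snd x))"
  proof (rule lborel_pair.Fubini_integrable)
    show "integrable lborel (\<lambda>x. \<integral>y. norm (f (fst (x, y)) * g (snd (x, y))) \<partial>lborel)"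
      using f g by (simp add: abs_mult)
  qed (use g in simp_all)
  then show "integrable lborel (\<lambda>x::real \<times> real. f (fst x) * g (snd x))"
    by (simp only: lborel_prod)
  have "integral\<^sup>L (lborel \<Otimes>\<^sub>M lborel) (\<lambda>x::real \<times> real. f (fst x) * g (snd x))
      = integral\<^sup>L lborel f * integral\<^sup>L lborel g"
    using lborel_pair.integral_fst'[OF int] by simp
  then show "integral\<^sup>L lborel (\<lambda>x::real \<times> real. f (fst x) * g (snd x))
      = integral\<^sup>L lborel f * integral\<^sup>L lborel g"
    by (simp only: lborel_prod)
qed

lemma has_integral_affinity_preimage:
  fixes f :: "'a::euclidean_space \<Rightarrow> 'b::banach"
  assumes "(f has_integral i) S" and "bounded S" and "m \<noteq> 0"
  shows "((\<lambda>x. f (m *\<^sub>R x + c)) has_integral i /\<^sub>R \<bar>m\<bar> ^ DIM('a)) {x. m *\<^sub>R x + c \<in> S}"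
proof -
  obtain a where S: "S \<subseteq> cbox (- a) a"
    using assms(2) bounded_subset_cbox_symmetric by blast
  have "((\<lambda>x. if x \<in> S then f x else 0) has_integral i) (cbox (- a) a)"
    using assms(1) S by simp
  then have "((\<lambda>x. if m *\<^sub>R x + c \<in> S then f (m *\<^sub>R x + c) else 0) has_integral i /\<^sub>R \<bar>m\<bar> ^ DIM('a))
      ((\<lambda>x. (1 / m) *\<^sub>R x + - ((1 / m) *\<^sub>R c)) ` cbox (- a) a)"
    using has_integral_affinity[OF _ assms(3)] by (simp add: divide_inverse_commute)
  moreover have "{x. m *\<^sub>R x + c \<in> S} \<subseteq> (\<lambda>x. (1 / m) *\<^sub>R x + - ((1 / m) *\<^sub>R c)) ` cbox (- a) a"
  proof
    fix x assume "x \<in> {x. m *\<^sub>R x + c \<in> S}"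
    then show "x \<in> (\<lambda>x. (1 / m) *\<^sub>R x + - ((1 / m) *\<^sub>R c)) ` cbox (- a) a"
      using S assms(3) by (intro image_eqI[of _ _ "m *\<^sub>R x + c"]) (auto simp: algebra_simps)
  qed
  ultimately show ?thesis
    using has_integral_restrict[where S = "{x. m *\<^sub>R x + c \<in> S}" and f = "\<lambda>x. f (m *\<^sub>R x + c)"]
    by simp
qed

definition triangle :: "real \<Rightarrow> real \<Rightarrow> (real \<times> real) set" where
  "triangle a b = {(s, t). a \<le> s \<and> s \<le> t \<and> t \<le> b}"

lemma iter_int_eq_integral_triangle:
  "iter_int g a b = integral (triangle 0 1) (\<lambda>(t1, t2). pullback g a t1 * pullback g b t2)"
  by (simp add: iter_int_def triangle_def)

lemma bounded_triangle: "bounded (triangle a b)" "bounded (prod.swap ` triangle a b)"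
proof -
  have "triangle a b \<subseteq> cbox (a, a) (b, b)" "prod.swap ` triangle a b \<subseteq> cbox (a, a) (b, b)"
    by (auto simp: triangle_def cbox_Pair_iff)
  then show "bounded (triangle a b)" "bounded (prod.swap ` triangle a b)"
    by (auto intro: bounded_subset[OF bounded_cbox])
qed

lemma triangle_in_sets_lborel: "triangle a b \<in> sets lborel" "prod.swap ` triangle a b \<in> sets lborel"
proof -
  have "closed {x::real \<times> real. a \<le> fst x \<and> fst x \<le> snd x \<and> snd x \<le> b}"
    "closed {x::real \<times> real. a \<le> snd x \<and> snd x \<le> fst x \<and> fst x \<le> b}"
    by (intro closed_Collect_conj closed_Collect_le continuous_intros)+
  moreover have "triangle a b = {x. a \<le> fst x \<and> fst x \<le> snd x \<and> snd x \<le> b}"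
    "prod.swap ` triangle a b = {x. a \<le> snd x \<and> snd x \<le> fst x \<and> fst x \<le> b}"
    by (auto simp: triangle_def image_iff)
  ultimately show "triangle a b \<in> sets lborel" "prod.swap ` triangle a b \<in> sets lborel"
    by simp_all
qed

lemma negligible_line: "\<alpha> \<noteq> 0 \<or> \<beta> \<noteq> 0 \<Longrightarrow> negligible {x::real \<times> real. \<alpha> * fst x + \<beta> * snd x = c}"
  using negligible_hyperplane[of "(\<alpha>, \<beta>)" c] by (simp add: inner_prod_def zero_prod_def)

lemma has_integral_triangles:
  fixes f g :: "real \<Rightarrow> real"
  assumes f: "integrable lborel f" and g: "integrable lborel g"
    and f0: "\<And>s. s \<notin> {0..1} \<Longrightarrow> f s = 0" and g0: "\<And>s. s \<notin> {0..1} \<Longrightarrow> g s = 0"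
  defines "Q \<equiv> \<lambda>x. f (fst x) * g (snd x)"
  defines "R \<equiv> integral (triangle 0 1) Q"
  shows "(Q has_integral R) (triangle 0 1)"
    and "(Q has_integral integral\<^sup>L lborel f * integral\<^sup>L lborel g - R) (prod.swap ` triangle 0 1)"
proof -
  have Q: "integrable lborel Q" "integral\<^sup>L lborel Q = integral\<^sup>L lborel f * integral\<^sup>L lborel g"
    unfolding Q_def using lborel_integral_tensor[OF f g] by simp_all
  have "(Q has_integral integral\<^sup>L lborel f * integral\<^sup>L lborel g) UNIV"
    using has_integral_integral_lborel[OF Q(1)] Q(2) by simp
  moreover have "(\<lambda>x. if x \<in> triangle 0 1 \<union> prod.swap ` triangle 0 1 then Q x else 0) = Q"
    using f0 g0 by (auto simp: Q_def fun_eq_iff triangle_def image_iff)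
  ultimately have square: "(Q has_integral integral\<^sup>L lborel f * integral\<^sup>L lborel g)
      (triangle 0 1 \<union> prod.swap ` triangle 0 1)"
    by (metis has_integral_restrict_UNIV)
  have "Q integrable_on triangle 0 1" "Q integrable_on prod.swap ` triangle 0 1"
    using integrable_mult_indicator[OF triangle_in_sets_lborel(1) Q(1)]
      integrable_mult_indicator[OF triangle_in_sets_lborel(2) Q(1)]
    by (auto intro!: set_borel_integral_eq_integral(1) simp: set_integrable_def)
  then have lower: "(Q has_integral R) (triangle 0 1)"
    and upper: "(Q has_integral integral (prod.swap ` triangle 0 1) Q) (prod.swap ` triangle 0 1)"
    unfolding R_def by (simp_all add: has_integral_integral)
  moreover have "negligible (triangle 0 1 \<inter> prod.swap ` triangle 0 1)"
    by (rule negligible_subset[OF negligible_line[of 1 "-1" 0]]) (auto simp: triangle_def)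
  ultimately have "(Q has_integral R + integral (prod.swap ` triangle 0 1) Q)
      (triangle 0 1 \<union> prod.swap ` triangle 0 1)"
    by (rule has_integral_Un)
  with square have "integral (prod.swap ` triangle 0 1) Q = integral\<^sup>L lborel f * integral\<^sup>L lborel g - R"
    by (metis has_integral_unique add_diff_cancel_left')
  with lower upper show "(Q has_integral R) (triangle 0 1)"
    "(Q has_integral integral\<^sup>L lborel f * integral\<^sup>L lborel g - R) (prod.swap ` triangle 0 1)"
    by simp_all
qed

lemma has_integral_half_triangle:
  fixes Q :: "real \<times> real \<Rightarrow> real"
  assumes "(Q has_integral R) (triangle 0 1)"
  shows "((\<lambda>x. 4 * Q (2 *\<^sub>R x)) has_integral R) (triangle 0 (1/2))"
proof -
  have "((\<lambda>x. Q (2 *\<^sub>R x + 0)) has_integral R /\<^sub>R \<bar>2\<bar> ^ DIM(real \<times> real)) {x. 2 *\<^sub>R x + 0 \<in> triangle 0 1}"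
    by (rule has_integral_affinity_preimage[OF assms bounded_triangle(1)]) simp
  then have "((\<lambda>x. 4 * Q (2 *\<^sub>R x + 0)) has_integral 4 * (R /\<^sub>R \<bar>2\<bar> ^ DIM(real \<times> real)))
      {x. 2 *\<^sub>R x + 0 \<in> triangle 0 1}"
    by (rule has_integral_mult_right)
  moreover have "{x. 2 *\<^sub>R x + 0 \<in> triangle 0 1} = triangle 0 (1/2)"
    by (auto simp: triangle_def)
  ultimately show ?thesis
    by simp
qed

lemma has_integral_reflected_half_triangle:
  fixes Q :: "real \<times> real \<Rightarrow> real"
  assumes "(Q has_integral R) (prod.swap ` triangle 0 1)"
  shows "((\<lambda>x. 4 * Q ((2, 2) - 2 *\<^sub>R x)) has_integral R) (triangle (1/2) 1)"
proof -
  have "((\<lambda>x. Q ((- 2) *\<^sub>R x + (2, 2))) has_integral R /\<^sub>R \<bar>- 2\<bar> ^ DIM(real \<times> real))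
      {x. (- 2) *\<^sub>R x + (2, 2) \<in> prod.swap ` triangle 0 1}"
    by (rule has_integral_affinity_preimage[OF assms bounded_triangle(2)]) simp
  then have "((\<lambda>x. 4 * Q ((- 2) *\<^sub>R x + (2, 2))) has_integral 4 * (R /\<^sub>R \<bar>- 2\<bar> ^ DIM(real \<times> real)))
      {x. (- 2) *\<^sub>R x + (2, 2) \<in> prod.swap ` triangle 0 1}"
    by (rule has_integral_mult_right)
  moreover have "{x. (- 2) *\<^sub>R x + (2, 2) \<in> prod.swap ` triangle 0 1} = triangle (1/2) 1"
    by (auto simp: triangle_def image_iff)
  moreover have "(- 2) *\<^sub>R x + (2, 2) = (2, 2) - 2 *\<^sub>R x" for x :: "real \<times> real"
    by simp
  ultimately show ?thesis
    by simp
qed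

lemma has_integral_half_square:
  fixes f g :: "real \<Rightarrow> real"
  assumes f: "integrable lborel f" and g: "integrable lborel g"
    and f0: "\<And>s. s \<notin> {0..1} \<Longrightarrow> f s = 0" and g0: "\<And>s. s \<notin> {0..1} \<Longrightarrow> g s = 0"
  shows "((\<lambda>x. 4 * (f (2 * fst x) * g (2 - 2 * snd x))) has_integral
      integral\<^sup>L lborel f * integral\<^sup>L lborel g) ({0..1/2} \<times> {1/2..1})"
proof -
  define f' g' where "f' s = f (0 + 2 * s)" and "g' s = g (2 + (- 2) * s)" for s
  have int: "integrable lborel f'" "integrable lborel g'"
    unfolding f'_def g'_def
    by (rule lborel_integrable_real_affine[OF f], simp, rule lborel_integrable_real_affine[OF g], simp)
  have half: "integral\<^sup>L lborel f' = integral\<^sup>L lborel f / 2" "integral\<^sup>L lborel g' = integral\<^sup>L lborel g / 2"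
    using lborel_integral_real_affine[of 2 f 0] lborel_integral_real_affine[of "- 2" g 2]
    unfolding f'_def g'_def by simp_all
  have "4 * (integral\<^sup>L lborel f' * integral\<^sup>L lborel g') = integral\<^sup>L lborel f * integral\<^sup>L lborel g"
    unfolding half by simp
  then have "((\<lambda>x. 4 * (f' (fst x) * g' (snd x))) has_integral integral\<^sup>L lborel f * integral\<^sup>L lborel g) UNIV"
    using has_integral_mult_right[OF has_integral_integral_lborel[OF lborel_integral_tensor(1)[OF int]], of 4]
      lborel_integral_tensor(2)[OF int] by simp
  moreover have "(\<lambda>x. 4 * (f' (fst x) * g' (snd x)))
      = (\<lambda>x. if x \<in> {0..1/2} \<times> {1/2..1} then 4 * (f (2 * fst x) * g (2 - 2 * snd x)) else 0)"
  proof
    fix x :: "real \<times> real"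
    show "4 * (f' (fst x) * g' (snd x))
        = (if x \<in> {0..1/2} \<times> {1/2..1} then 4 * (f (2 * fst x) * g (2 - 2 * snd x)) else 0)"
    proof (cases "x \<in> {0..1/2} \<times> {1/2..1}")
      case False
      then have "2 * fst x \<notin> {0..1} \<or> 2 + (- 2) * snd x \<notin> {0..1}"
        by (auto simp: mem_Times_iff)
      then show ?thesis
        using False f0 g0 by (auto simp: f'_def g'_def)
    qed (simp add: f'_def g'_def)
  qed
  ultimately show ?thesis
    by (simp add: has_integral_restrict_UNIV)
qed

lemma negligible_grid: "finite A \<Longrightarrow> negligible {x::real \<times> real. fst x \<in> A \<or> snd x \<in> A}"
proof -
  assume "finite A"
  have "negligible {x::real \<times> real. fst x = c}" "negligible {x::real \<times> real. snd x = c}" for c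
    using negligible_line[of 1 0 c] negligible_line[of 0 1 c] by simp_all
  moreover have "{x::real \<times> real. fst x \<in> A \<or> snd x \<in> A}
      = (\<Union>c\<in>A. {x. fst x = c} \<union> {x. snd x = c})"
    by auto
  ultimately show ?thesis
    using \<open>finite A\<close> by (auto intro!: negligible_Union negligible_Un)
qed

lemma has_integral_triangle_product:
  fixes f g :: "real \<Rightarrow> real" and F G :: "real \<Rightarrow> complex"
  assumes f: "integrable lborel f" and g: "integrable lborel g"
    and f0: "\<And>s. s \<notin> {0..1} \<Longrightarrow> f s = 0" and g0: "\<And>s. s \<notin> {0..1} \<Longrightarrow> g s = 0"
    and F: "\<And>t. 0 < t \<Longrightarrow> t < 1 \<Longrightarrow> F t = of_real (f t)"
    and G: "\<And>t. 0 < t \<Longrightarrow> t < 1 \<Longrightarrow> G t = of_real (g t)"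
  shows "((\<lambda>(s, t). F s * G t) has_integral
      of_real (integral (triangle 0 1) (\<lambda>x. f (fst x) * g (snd x)))) (triangle 0 1)"
proof (rule has_integral_spike[OF negligible_grid[of "{0, 1}"]])
  show "((\<lambda>x. complex_of_real (f (fst x) * g (snd x))) has_integral
      complex_of_real (integral (triangle 0 1) (\<lambda>x. f (fst x) * g (snd x)))) (triangle 0 1)"
    by (rule has_integral_of_real[OF has_integral_triangles(1)[OF f g f0 g0]])
qed (auto simp: triangle_def F G)

text \<open>Chen's formula for the iterated integral along a path alpha followed by the reverse of beta,
  where F and G are the pullbacks: the three pieces of the simplex give
  int_alpha ab, - int_alpha a int_beta b and int_beta a int_beta b - int_beta ab.\<close>

lemma has_integral_triangle_join_reversepath:
  fixes f g :: "real \<Rightarrow> real" and F G :: "real \<Rightarrow> complex"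
  assumes f: "integrable lborel f" and g: "integrable lborel g"
    and f0: "\<And>s. s \<notin> {0..1} \<Longrightarrow> f s = 0" and g0: "\<And>s. s \<notin> {0..1} \<Longrightarrow> g s = 0"
    and F1: "\<And>t. 0 < t \<Longrightarrow> t < 1/2 \<Longrightarrow> F t = a\<^sub>1 * of_real (2 * f (2 * t))"
    and F2: "\<And>t. 1/2 < t \<Longrightarrow> t < 1 \<Longrightarrow> F t = - a\<^sub>2 * of_real (2 * f (2 - 2 * t))"
    and G1: "\<And>t. 0 < t \<Longrightarrow> t < 1/2 \<Longrightarrow> G t = b\<^sub>1 * of_real (2 * g (2 * t))"
    and G2: "\<And>t. 1/2 < t \<Longrightarrow> t < 1 \<Longrightarrow> G t = - b\<^sub>2 * of_real (2 * g (2 - 2 * t))"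
  defines "I \<equiv> integral\<^sup>L lborel f * integral\<^sup>L lborel g"
    and "R \<equiv> integral (triangle 0 1) (\<lambda>x. f (fst x) * g (snd x))"
  shows "((\<lambda>(s, t). F s * G t) has_integral
      a\<^sub>1 * b\<^sub>1 * of_real R - a\<^sub>1 * b\<^sub>2 * of_real I + a\<^sub>2 * b\<^sub>2 * of_real (I - R)) (triangle 0 1)"
proof -
  note triangles = has_integral_triangles[OF f g f0 g0, folded I_def R_def]
  note N = negligible_grid[of "{0, 1/2, 1}"]
  have lower: "((\<lambda>(s, t). F s * G t) has_integral a\<^sub>1 * b\<^sub>1 * of_real R) (triangle 0 (1/2))"
    by (rule has_integral_spike[OF N _ has_integral_mult_right[OF has_integral_of_real[OF
          has_integral_half_triangle[OF triangles(1)]]]])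
      (auto simp: triangle_def F1 G1 mult_ac)
  have middle: "((\<lambda>(s, t). F s * G t) has_integral - (a\<^sub>1 * b\<^sub>2) * of_real I) ({0..1/2} \<times> {1/2..1})"
    by (rule has_integral_spike[OF N _ has_integral_mult_right[OF has_integral_of_real[OF
          has_integral_half_square[OF f g f0 g0, folded I_def]]]])
      (auto simp: F1 G2 mult_ac)
  have upper: "((\<lambda>(s, t). F s * G t) has_integral a\<^sub>2 * b\<^sub>2 * of_real (I - R)) (triangle (1/2) 1)"
    by (rule has_integral_spike[OF N _ has_integral_mult_right[OF has_integral_of_real[OF
          has_integral_reflected_half_triangle[OF triangles(2)]]]])
      (auto simp: triangle_def F2 G2 mult_ac)
  have "((\<lambda>(s, t). F s * G t) has_integral
      a\<^sub>1 * b\<^sub>1 * of_real R + - (a\<^sub>1 * b\<^sub>2) * of_real I + a\<^sub>2 * b\<^sub>2 * of_real (I - R))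
      (triangle 0 (1/2) \<union> {0..1/2} \<times> {1/2..1} \<union> triangle (1/2) 1)"
    by (intro has_integral_Un lower middle upper negligible_subset[OF N]) (auto simp: triangle_def)
  moreover have "triangle 0 (1/2) \<union> {0..1/2} \<times> {1/2..1} \<union> triangle (1/2) 1 = triangle 0 1"
    by (auto simp: triangle_def)
  ultimately show ?thesis
    by simp
qed

section \<open>The iterated integrals\<close>

lemma xx_eq_integral_triangle:
  assumes "i \<in> {1,2,3}" and "j \<in> {1,2,3}"
  shows "xx i j = of_real (integral (triangle 0 1)
      (\<lambda>x. beta_density (hh i) (hh (i + 1)) (fst x) * beta_density (hh j) (hh (j + 1)) (snd x)))"
  unfolding xx_def iter_int_eq_integral_triangle
  by (intro integral_unique has_integral_triangle_product[OF integrable_beta_density_hh[OF assms(1)]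
        integrable_beta_density_hh[OF assms(2)] beta_density_eq_0 beta_density_eq_0
        pullback_e0[OF assms(1)] pullback_e0[OF assms(2)]])

lemma iter_int_loop_l:
  assumes "i \<in> {1,2,3}" and "j \<in> {1,2,3}"
  shows "iter_int (loop_l k) (omega i) (omega j)
      = xi i powi (k - 1) * xi j powi (k - 1) * xx i j - xi i powi (k - 1) * xi j powi k
        + xi i powi k * xi j powi k * (1 - xx i j)"
proof -
  have "((\<lambda>(s, t). pullback (loop_l k) (omega i) s * pullback (loop_l k) (omega j) t) has_integral
      xi i powi (k - 1) * xi j powi (k - 1) * xx i j - xi i powi (k - 1) * xi j powi k * of_real (1 * 1)
        + xi i powi k * xi j powi k * (of_real (1 * 1) - xx i j)) (triangle 0 1)"
    using has_integral_triangle_join_reversepath[OF integrable_beta_density_hh[OF assms(1)]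
        integrable_beta_density_hh[OF assms(2)] beta_density_eq_0 beta_density_eq_0
        pullback_loop_l[OF assms(1), where k = k] pullback_loop_l[OF assms(2), where k = k]]
    unfolding integral_beta_density_hh[OF assms(1)] integral_beta_density_hh[OF assms(2)] of_real_diff
      xx_eq_integral_triangle[OF assms, symmetric] .
  then show ?thesis
    unfolding iter_int_eq_integral_triangle by (simp add: integral_unique)
qed

theorem lemma4p5:
  fixes i j :: nat and k :: int
  assumes "i \<in> {1,2,3}" and "j \<in> {1,2,3}" and "0 \<le> k" and "k \<le> 7"
  shows "iter_int (loop_l k) (omega i) (omega j)
       = (xi i * xi j) powi (k - 1) * (1 - xi i * xi j) * xx i j
         + (xi i * xi j) powi (k - 1) * (xi i * xi j - xi j)"
proof -
  have "xi a \<noteq> 0" for a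
    by (simp add: xi_def zeta7_def)
  then have "xi a powi k = xi a powi (k - 1) * xi a" for a
    by (metis power_int_minus_mult)
  then show ?thesis
    unfolding iter_int_loop_l[OF assms(1,2)] power_int_mult_distrib
    by (simp add: algebra_simps)
qed

end
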